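(* Let $P$ (messages), $K$ (keys) and $C$ (ciphertexts) be finite sets. Let $E \subseteq (P \times K) \times C$ be a relation (encryption) and let $(D_c)_{c \in C}$ be a family of relations $D_c \subseteq K \times P$ (decryption, controlled by the public ciphertext $c$). Suppose the following correctness condition holds: for all $p, p' \in P$ and all $c \in C$, $$\big(\exists k \in K:\ ((p,k),c) \in E \text{ and } (k,p') \in D_c\big) \iff p' = p.$$ Suppose moreover that $E$ satisfies the security property: for every $p \in P$, $\{c \in C : \exists k \in K,\ ((p,k),c) \in E\} = C$. If $E$ is invertible as a relation (i.e. $E$ is the graph of a bijection $P \times K \to C$), then $P$ has at most one element.
   Context: This is the concrete form, in the bicategory of matrices of relations ($\mathbf{2Rel}$), of a classical encrypted communication protocol using a one-time pad: the key is generated nondeterministically as the relation $\{(k,k) : k \in K\}$ from the one-element set to $K \times K$ (both parties receive the same key); Alice encrypts her private message $p$ with her key copy via $E$ producing public ciphertext $c$; Bob applies $D_c$ to his key copy to obtain a private message. The correctness condition says that the whole protocol equals the process which produces an arbitrary (nondeterministically chosen) public ciphertext and delivers $p$ unchanged to Bob. The security property says that encrypting with one key copy and discarding the other copy is the same as discarding the message and producing an arbitrary ciphertext. Invertibility of a 2-cell here means invertibility of the relation under relational composition, which for relations between finite sets means it is the graph of a bijection. *)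

theory Defs
  imports Main
begin

definition rel_invertible :: "'a set \<Rightarrow> 'b set \<Rightarrow> ('a \<times> 'b) set \<Rightarrow> bool" where
  "rel_invertible A B E \<longleftrightarrow>
     (\<exists>R. R \<subseteq> B \<times> A \<and> E O R = Id_on A \<and> R O E = Id_on B)"

end

theory Submission
  imports Defs
begin

text \<open>An invertible relation is the graph of a bijection, so encryption identifies
  \<open>P \<times> K\<close> with \<open>C\<close> and \<open>card C = card P * card K\<close>. Security says that for a single
  message \<open>p\<close> the keys already reach every ciphertext, so \<open>card C \<le> card K\<close>.
  Since \<open>K\<close> is nonempty, \<open>card P \<le> 1\<close>.\<close>

lemma rel_invertible_single_valued:
  assumes "rel_invertible A B E" and "E \<subseteq> A \<times> B"
  shows "single_valued E"
proof (rule single_valuedI)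
  fix a b b' assume ab: "(a, b) \<in> E" and ab': "(a, b') \<in> E"
  from assms obtain R where R: "E O R = Id_on A" "R O E = Id_on B"
    unfolding rel_invertible_def by blast
  have "a \<in> A"
    using ab assms(2) by blast
  then have "(a, a) \<in> E O R" unfolding R(1) ..
  then obtain c where "(a, c) \<in> E" "(c, a) \<in> R" by blast
  then have "(c, b) \<in> R O E" "(c, b') \<in> R O E" using ab ab' by auto
  then show "b = b'" using R(2) by auto
qed

lemma rel_invertible_converse:
  assumes "rel_invertible A B E"
  shows "rel_invertible B A (E\<inverse>)"
proof -
  from assms obtain R where "R \<subseteq> B \<times> A" "E O R = Id_on A" "R O E = Id_on B"
    unfolding rel_invertible_def by blast
  then have "R\<inverse> \<subseteq> A \<times> B" "E\<inverse> O R\<inverse> = Id_on B" "R\<inverse> O E\<inverse> = Id_on A"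
    by (auto simp flip: converse_relcomp)
  then show ?thesis unfolding rel_invertible_def by blast
qed

lemma rel_invertible_Domain:
  assumes "rel_invertible A B E" and "E \<subseteq> A \<times> B"
  shows "Domain E = A"
proof -
  from assms(1) obtain R where R: "E O R = Id_on A" unfolding rel_invertible_def by blast
  have "A \<subseteq> Domain E"
  proof
    fix a assume "a \<in> A"
    then have "(a, a) \<in> E O R" unfolding R ..
    then show "a \<in> Domain E" by blast
  qed
  with assms(2) show ?thesis by blast
qed

lemma card_eq_if_rel_invertible:
  assumes "rel_invertible A B E" and "E \<subseteq> A \<times> B"
  shows "card A = card B"
proof -
  have inv': "rel_invertible B A (E\<inverse>)" and sub': "E\<inverse> \<subseteq> B \<times> A"
    using assms rel_invertible_converse by blast+
  have "bij_betw fst E A"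
    using rel_invertible_single_valued[OF assms] rel_invertible_Domain[OF assms]
    by (auto simp: bij_betw_def inj_on_def single_valued_def fst_eq_Domain)
  moreover have "bij_betw snd E B"
    using rel_invertible_single_valued[OF inv' sub'] rel_invertible_Domain[OF inv' sub']
    by (auto simp: bij_betw_def inj_on_def single_valued_def snd_eq_Range)
  ultimately show ?thesis by (metis bij_betw_same_card)
qed

lemma card_Image_le_if_single_valued:
  assumes "single_valued E" and "finite S"
  shows "card (E `` S) \<le> card S"
proof -
  let ?G = "E \<inter> S \<times> UNIV"
  have inj: "inj_on fst ?G"
    using assms(1) by (auto simp: inj_on_def single_valued_def)
  have "fst ` ?G \<subseteq> S" by auto
  then have "finite ?G"
    using assms(2) inj by (metis finite_imageD finite_subset)
  have "E `` S = snd ` ?G" by force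
  also have "card \<dots> \<le> card ?G"
    using \<open>finite ?G\<close> by (rule card_image_le)
  also have "\<dots> = card (fst ` ?G)"
    using inj by (rule card_image[symmetric])
  also have "\<dots> \<le> card S"
    using assms(2) \<open>fst ` ?G \<subseteq> S\<close> by (rule card_mono)
  finally show ?thesis .
qed

theorem theorem5:
  fixes P :: "'p set" and K :: "'k set" and C :: "'c set"
    and E :: "(('p \<times> 'k) \<times> 'c) set"
    and D :: "'c \<Rightarrow> ('k \<times> 'p) set"
  assumes finP: "finite P" and finK: "finite K" and finC: "finite C"
    and K_ne: "K \<noteq> {}"
    and E_rel: "E \<subseteq> (P \<times> K) \<times> C"
    and D_rel: "\<And>c. c \<in> C \<Longrightarrow> D c \<subseteq> K \<times> P"
    and correct: "\<And>p p' c. p \<in> P \<Longrightarrow> p' \<in> P \<Longrightarrow> c \<in> C \<Longrightarrow>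
         (\<exists>k\<in>K. ((p, k), c) \<in> E \<and> (k, p') \<in> D c) \<longleftrightarrow> p' = p"
    and secure: "\<And>p. p \<in> P \<Longrightarrow> {c \<in> C. \<exists>k\<in>K. ((p, k), c) \<in> E} = C"
    and inv: "rel_invertible (P \<times> K) C E"
  shows "card P \<le> 1"
proof (cases "P = {}")
  case False
  then obtain p where p: "p \<in> P" by blast
  have "card P * card K = card C"
    using card_eq_if_rel_invertible[OF inv E_rel] by (simp add: card_cartesian_product)
  also have "C = E `` ({p} \<times> K)"
    using secure[OF p] E_rel by blast
  also have "card \<dots> \<le> card ({p} \<times> K)"
    using rel_invertible_single_valued[OF inv E_rel] finK by (intro card_Image_le_if_single_valued) simp_all
  also have "\<dots> = card K" by (simp add: card_cartesian_product)
  finally show ?thesis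
    using finK K_ne by (simp add: card_gt_0_iff)
qed simp

end
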